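(* Let $G$ be a graph with vertex set $V$ and $k\ge1$, let $G'$, $L,R,P,Q$ be as constructed in the context, and let $S=V\cup L\cup Q$, $T=V\cup R\cup P$ and $\ell=2\binom k2+\binom k2^2+2k$. If $G$ has a clique of size $k$, then there is a token jumping reconfiguration sequence of length at most $\ell$ from $S$ to $T$ in $G'$.
   Context: Construction of $G'$: start with $V$; for each edge $e=\{u,v\}$ of $G$ add a vertex $x_e$ adjacent to $u$ and $v$ (let $E$ be the set of these). Add disjoint sets $L$ and $R$ of size $\binom k2$ each, and for every $l\in L$, $r\in R$ add a path $l-p_{l,r}-q_{l,r}-r$ with two new internal vertices; $P$ is the set of all $p_{l,r}$ (the neighbors of $L$) and $Q$ the set of all $q_{l,r}$ (the neighbors of $R$). These vertices have no edges to $V\cup E$. For each $v\in V$ add a new vertex $z_v$ adjacent only to $v$. A token jumping reconfiguration sequence of length $m$ from $S$ to $T$ is a sequence $S=I_0,\dots,I_m=T$ of independent sets of size $|S|$ with each $I_{j+1}=(I_j\setminus\{u\})\cup\{w\}$ for some $u\in I_j$, $w\in V(G')\setminus I_j$. *)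

theory Defs
  imports Main
begin

definition simple_graph :: "'a set \<Rightarrow> 'a set set \<Rightarrow> bool" where
  "simple_graph V E \<longleftrightarrow> finite V \<and>
     (\<forall>e\<in>E. \<exists>u v. u \<in> V \<and> v \<in> V \<and> u \<noteq> v \<and> e = {u, v})"

definition is_clique :: "'a set \<Rightarrow> 'a set set \<Rightarrow> 'a set \<Rightarrow> bool" where
  "is_clique V E K \<longleftrightarrow> K \<subseteq> V \<and> (\<forall>u\<in>K. \<forall>v\<in>K. u \<noteq> v \<longrightarrow> {u, v} \<in> E)"

text \<open>Vertices of G': original vertices, edge vertices x_e, L, R (indexed by i < binom k 2),
  path vertices p_{l,r}, q_{l,r}, and pendant vertices z_v.\<close>
datatype 'a gvtx = Vx 'a | Ex "'a set" | Lx nat | Rx nat | Px nat nat | Qx nat nat | Zx 'a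

definition Lset :: "nat \<Rightarrow> 'a gvtx set" where
  "Lset k = {Lx i | i. i < k choose 2}"
definition Rset :: "nat \<Rightarrow> 'a gvtx set" where
  "Rset k = {Rx j | j. j < k choose 2}"
definition Pset :: "nat \<Rightarrow> 'a gvtx set" where
  "Pset k = {Px i j | i j. i < k choose 2 \<and> j < k choose 2}"
definition Qset :: "nat \<Rightarrow> 'a gvtx set" where
  "Qset k = {Qx i j | i j. i < k choose 2 \<and> j < k choose 2}"

definition Gp_verts :: "'a set \<Rightarrow> 'a set set \<Rightarrow> nat \<Rightarrow> 'a gvtx set" where
  "Gp_verts V E k = Vx ` V \<union> Ex ` E \<union> Lset k \<union> Rset k \<union> Pset k \<union> Qset k \<union> Zx ` V"

text \<open>Directed version of the edges of G' (made symmetric in Gp_adj).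
  Path l - p_{l,r} - q_{l,r} - r is Lx i - Px i j - Qx i j - Rx j.\<close>
definition Gp_edges :: "'a set \<Rightarrow> 'a set set \<Rightarrow> nat \<Rightarrow> ('a gvtx \<times> 'a gvtx) set" where
  "Gp_edges V E k =
     {(Vx u, Ex e) | u e. e \<in> E \<and> u \<in> e}
   \<union> {(Lx i, Px i j) | i j. i < k choose 2 \<and> j < k choose 2}
   \<union> {(Px i j, Qx i j) | i j. i < k choose 2 \<and> j < k choose 2}
   \<union> {(Qx i j, Rx j) | i j. i < k choose 2 \<and> j < k choose 2}
   \<union> {(Vx v, Zx v) | v. v \<in> V}"

definition Gp_adj :: "'a set \<Rightarrow> 'a set set \<Rightarrow> nat \<Rightarrow> 'a gvtx \<Rightarrow> 'a gvtx \<Rightarrow> bool" where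
  "Gp_adj V E k x y \<longleftrightarrow> (x, y) \<in> Gp_edges V E k \<or> (y, x) \<in> Gp_edges V E k"

definition indep_Gp :: "'a set \<Rightarrow> 'a set set \<Rightarrow> nat \<Rightarrow> 'a gvtx set \<Rightarrow> bool" where
  "indep_Gp V E k I \<longleftrightarrow> I \<subseteq> Gp_verts V E k \<and>
     (\<forall>x\<in>I. \<forall>y\<in>I. \<not> Gp_adj V E k x y)"

definition tj_seq :: "'a set \<Rightarrow> 'a set set \<Rightarrow> nat \<Rightarrow> 'a gvtx set \<Rightarrow> 'a gvtx set \<Rightarrow> nat \<Rightarrow> bool" where
  "tj_seq V E k S T m \<longleftrightarrow> (\<exists>I :: nat \<Rightarrow> 'a gvtx set.
     I 0 = S \<and> I m = T \<and>
     (\<forall>j\<le>m. indep_Gp V E k (I j) \<and> card (I j) = card S) \<and>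
     (\<forall>j<m. \<exists>u\<in>I j. \<exists>w\<in>Gp_verts V E k - I j. I (Suc j) = (I j - {u}) \<union> {w}))"

end

theory Submission
  imports Defs
begin

(* Let K be a k-clique and enumerate its edges as g 0, ..., g (binom k 2 - 1). The tokens move in
   five phases, one token per step: Vx v to Zx v for v in K; Lx i to Ex (g i); Qx i j to Px i j;
   Ex (g i) to Rx i; Zx v back to Vx v. The edge tokens Ex (g i) never meet an adjacent vertex token
   because the tokens of K are parked on the pendants while they are present; the P tokens arrive
   only after the L tokens have left, and the R tokens only after the Q tokens have left. This
   takes k + binom k 2 + (binom k 2)^2 + binom k 2 + k steps. *)

definition tj_step :: "'a set \<Rightarrow> 'a set set \<Rightarrow> nat \<Rightarrow> 'a gvtx set \<Rightarrow> 'a gvtx set \<Rightarrow> bool" where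
  "tj_step V E k B C \<longleftrightarrow> (\<exists>u\<in>B. \<exists>w\<in>Gp_verts V E k - B. C = (B - {u}) \<union> {w})"

inductive tj_reach :: "'a set \<Rightarrow> 'a set set \<Rightarrow> nat \<Rightarrow> 'a gvtx set \<Rightarrow> 'a gvtx set \<Rightarrow> nat \<Rightarrow> bool"
  for V E k where
  refl: "indep_Gp V E k A \<Longrightarrow> tj_reach V E k A A 0"
| step: "tj_reach V E k A B n \<Longrightarrow> indep_Gp V E k C \<Longrightarrow> tj_step V E k B C \<Longrightarrow>
    tj_reach V E k A C (Suc n)"

lemma tj_reach_trans [trans]:
  assumes "tj_reach V E k A B n" "tj_reach V E k B C m"
  shows "tj_reach V E k A C (n + m)"
  using assms(2,1) by (induction rule: tj_reach.induct) (auto intro: tj_reach.intros)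

lemma tj_reach_finite:
  assumes "tj_reach V E k A B n" "finite A"
  shows "finite B"
  using assms by (induction rule: tj_reach.induct) (auto simp: tj_step_def)

lemma tj_seq_snoc:
  assumes seq: "tj_seq V E k A B n" and "finite B"
    and "indep_Gp V E k C" and "tj_step V E k B C"
  shows "tj_seq V E k A C (Suc n)"
proof -
  obtain I where I: "I 0 = A" "I n = B" "\<forall>j\<le>n. indep_Gp V E k (I j) \<and> card (I j) = card A"
    "\<forall>j<n. \<exists>u\<in>I j. \<exists>w\<in>Gp_verts V E k - I j. I (Suc j) = (I j - {u}) \<union> {w}"
    using seq unfolding tj_seq_def by blast
  obtain u w where uw: "u \<in> B" "w \<in> Gp_verts V E k - B" "C = insert w (B - {u})"
    using \<open>tj_step V E k B C\<close> unfolding tj_step_def by blast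
  have "card C = Suc (card (B - {u}))"
    using uw \<open>finite B\<close> by simp
  also have "\<dots> = card B"
    using card_Suc_Diff1[OF \<open>finite B\<close> uw(1)] .
  also have "\<dots> = card A"
    using I(2,3) by auto
  finally have card_C: "card C = card A" .
  define J where "J = I(Suc n := C)"
  have "\<forall>j\<le>Suc n. indep_Gp V E k (J j) \<and> card (J j) = card A"
    using I(3) card_C \<open>indep_Gp V E k C\<close> by (auto simp: J_def le_Suc_eq)
  moreover have "\<forall>j<Suc n. \<exists>u\<in>J j. \<exists>w\<in>Gp_verts V E k - J j. J (Suc j) = (J j - {u}) \<union> {w}"
    using I(2,4) uw by (auto simp: J_def less_Suc_eq)
  moreover have "J 0 = A" "J (Suc n) = C"
    using I(1) by (simp_all add: J_def)
  ultimately show ?thesis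
    unfolding tj_seq_def by blast
qed

lemma tj_reach_imp_tj_seq:
  assumes "tj_reach V E k A B n" "finite A"
  shows "tj_seq V E k A B n"
  using assms
proof (induction rule: tj_reach.induct)
  case (refl A)
  then show ?case
    unfolding tj_seq_def by (intro exI[of _ "\<lambda>_. A"]) simp
next
  case (step A B n C)
  then show ?case
    using tj_seq_snoc tj_reach_finite by blast
qed

lemma tj_reach_swap:
  assumes "finite X"
    and indep: "\<And>Y. Y \<subseteq> X \<Longrightarrow> indep_Gp V E k (S Y)"
    and move: "\<And>Y x. Y \<subseteq> X \<Longrightarrow> x \<in> X - Y \<Longrightarrow>
      a x \<in> S Y \<and> b x \<notin> S Y \<and> S (insert x Y) = insert (b x) (S Y - {a x})"
    and "S {} = A" "S X = A'"
  shows "tj_reach V E k A A' (card X)"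
proof -
  have "tj_reach V E k (S {}) (S Y) (card Y)" if "Y \<subseteq> X" for Y
    using finite_subset[OF that \<open>finite X\<close>] that
  proof (induction Y rule: finite_induct)
    case empty
    show ?case
      using tj_reach.refl indep[of "{}"] by simp
  next
    case (insert x Y)
    have "indep_Gp V E k (S (insert x Y))"
      using indep insert.prems by blast
    then have "b x \<in> Gp_verts V E k"
      using move[of Y x] insert unfolding indep_Gp_def by blast
    then have "tj_step V E k (S Y) (S (insert x Y))"
      using move[of Y x] insert unfolding tj_step_def by blast
    then show ?case
      using insert tj_reach.step \<open>indep_Gp V E k (S (insert x Y))\<close> by simp
  qed
  from this[of X] show ?thesis
    using \<open>S {} = A\<close> \<open>S X = A'\<close> by simp
qed

(* Every configuration visited is a union of layers of G', one token set per vertex kind. *)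
definition Gp_layers ::
  "'a set \<Rightarrow> 'a set \<Rightarrow> 'a set set \<Rightarrow> nat set \<Rightarrow> nat set \<Rightarrow> (nat \<times> nat) set \<Rightarrow> (nat \<times> nat) set \<Rightarrow>
    'a gvtx set" where
  "Gp_layers A Z F Ls Rs Ps Qs =
     Vx ` A \<union> Zx ` Z \<union> Ex ` F \<union> Lx ` Ls \<union> Rx ` Rs \<union> case_prod Px ` Ps \<union> case_prod Qx ` Qs"

lemma mem_Gp_layers [simp]:
  "Vx u \<in> Gp_layers A Z F Ls Rs Ps Qs \<longleftrightarrow> u \<in> A"
  "Zx u \<in> Gp_layers A Z F Ls Rs Ps Qs \<longleftrightarrow> u \<in> Z"
  "Ex e \<in> Gp_layers A Z F Ls Rs Ps Qs \<longleftrightarrow> e \<in> F"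
  "Lx i \<in> Gp_layers A Z F Ls Rs Ps Qs \<longleftrightarrow> i \<in> Ls"
  "Rx j \<in> Gp_layers A Z F Ls Rs Ps Qs \<longleftrightarrow> j \<in> Rs"
  "Px i j \<in> Gp_layers A Z F Ls Rs Ps Qs \<longleftrightarrow> (i, j) \<in> Ps"
  "Qx i j \<in> Gp_layers A Z F Ls Rs Ps Qs \<longleftrightarrow> (i, j) \<in> Qs"
  by (auto simp: Gp_layers_def)

lemma indep_Gp_layers:
  assumes "A \<subseteq> V" "Z \<subseteq> V" "F \<subseteq> E" "Ls \<subseteq> {..<k choose 2}" "Rs \<subseteq> {..<k choose 2}"
    and "Ps \<subseteq> {..<k choose 2} \<times> {..<k choose 2}" "Qs \<subseteq> {..<k choose 2} \<times> {..<k choose 2}"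
    and "A \<inter> Z = {}" "\<forall>e\<in>F. e \<inter> A = {}"
    and "\<forall>(i, j)\<in>Ps. i \<notin> Ls \<and> (i, j) \<notin> Qs" "\<forall>(i, j)\<in>Qs. j \<notin> Rs"
  shows "indep_Gp V E k (Gp_layers A Z F Ls Rs Ps Qs)"
proof -
  have "x \<in> Gp_verts V E k" if "x \<in> Gp_layers A Z F Ls Rs Ps Qs" for x
    using that assms(1-7)
    by (cases x) (auto simp: Gp_verts_def Lset_def Rset_def Pset_def Qset_def)
  moreover have "\<not> Gp_adj V E k x y"
    if "x \<in> Gp_layers A Z F Ls Rs Ps Qs" "y \<in> Gp_layers A Z F Ls Rs Ps Qs" for x y
    using that assms(8-11) by (auto simp: Gp_adj_def Gp_edges_def disjoint_iff)
  ultimately show ?thesis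
    unfolding indep_Gp_def by blast
qed

lemma tj_reach_through_clique_edges:
  assumes "finite V" "K \<subseteq> V" "inj_on g {..<k choose 2}"
    and g: "\<And>i. i < k choose 2 \<Longrightarrow> g i \<in> E \<and> g i \<subseteq> K"
  shows "tj_reach V E k (Vx ` V \<union> Lset k \<union> Qset k) (Vx ` V \<union> Rset k \<union> Pset k)
           (2 * card K + 2 * (k choose 2) + (k choose 2)^2)"
proof -
  define X where "X = {..<k choose 2}"
  have fin: "finite K" "finite X" "finite (X \<times> X)"
    using assms(1,2) finite_subset by (auto simp: X_def)
  have gX: "g ` X \<subseteq> E" "\<forall>e\<in>g ` X. e \<inter> (V - K) = {}"
    using g by (auto simp: X_def)
  have "tj_reach V E k (Gp_layers V {} {} X {} {} (X \<times> X))
      (Gp_layers (V - K) K {} X {} {} (X \<times> X)) (card K)"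
    by (rule tj_reach_swap[where S = "\<lambda>Y. Gp_layers (V - Y) Y {} X {} {} (X \<times> X)"
          and a = Vx and b = Zx])
      (use fin assms(2) in \<open>auto simp: X_def intro!: indep_Gp_layers, auto simp: Gp_layers_def X_def\<close>)
  also have "tj_reach V E k (Gp_layers (V - K) K {} X {} {} (X \<times> X))
      (Gp_layers (V - K) K (g ` X) {} {} {} (X \<times> X)) (card X)"
    by (rule tj_reach_swap[where S = "\<lambda>Y. Gp_layers (V - K) K (g ` Y) (X - Y) {} {} (X \<times> X)"
          and a = Lx and b = "Ex \<circ> g"])
      (use fin assms(2,3) gX in
        \<open>auto simp: X_def intro!: indep_Gp_layers, auto simp: Gp_layers_def X_def inj_on_def\<close>)
  also have "tj_reach V E k (Gp_layers (V - K) K (g ` X) {} {} {} (X \<times> X))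
      (Gp_layers (V - K) K (g ` X) {} {} (X \<times> X) {}) (card (X \<times> X))"
    by (rule tj_reach_swap[where S = "\<lambda>Y. Gp_layers (V - K) K (g ` X) {} {} Y (X \<times> X - Y)"
          and a = "case_prod Qx" and b = "case_prod Px"])
      (use fin assms(2) gX in \<open>auto simp: X_def intro!: indep_Gp_layers, auto simp: Gp_layers_def X_def\<close>)
  also have "tj_reach V E k (Gp_layers (V - K) K (g ` X) {} {} (X \<times> X) {})
      (Gp_layers (V - K) K {} {} X (X \<times> X) {}) (card X)"
    by (rule tj_reach_swap[where S = "\<lambda>Y. Gp_layers (V - K) K (g ` (X - Y)) {} Y (X \<times> X) {}"
          and a = "Ex \<circ> g" and b = Rx])
      (use fin assms(2,3) gX in
        \<open>auto simp: X_def intro!: indep_Gp_layers, auto simp: Gp_layers_def X_def inj_on_def\<close>)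
  also have "tj_reach V E k (Gp_layers (V - K) K {} {} X (X \<times> X) {})
      (Gp_layers V {} {} {} X (X \<times> X) {}) (card K)"
    by (rule tj_reach_swap[where S = "\<lambda>Y. Gp_layers (V - K \<union> Y) (K - Y) {} {} X (X \<times> X) {}"
          and a = Zx and b = Vx])
      (use fin assms(2) in \<open>auto simp: X_def intro!: indep_Gp_layers, auto simp: Gp_layers_def X_def\<close>)
  finally have "tj_reach V E k (Gp_layers V {} {} X {} {} (X \<times> X))
      (Gp_layers V {} {} {} X (X \<times> X) {}) (card K + card X + card (X \<times> X) + card X + card K)" .
  moreover have "Gp_layers V {} {} X {} {} (X \<times> X) = Vx ` V \<union> Lset k \<union> Qset k"
    "Gp_layers V {} {} {} X (X \<times> X) {} = Vx ` V \<union> Rset k \<union> Pset k"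
    by (auto simp: Gp_layers_def X_def Lset_def Rset_def Pset_def Qset_def)
  moreover have "card K + card X + card (X \<times> X) + card X + card K =
      2 * card K + 2 * (k choose 2) + (k choose 2)^2"
    by (simp add: X_def card_cartesian_product power2_eq_square)
  ultimately show ?thesis
    by (simp only:)
qed

lemma clique_edges_enumeration:
  assumes "is_clique V E K" "finite K"
  obtains g where "inj_on g {..<card K choose 2}"
    and "\<And>i. i < card K choose 2 \<Longrightarrow> g i \<in> E \<and> g i \<subseteq> K"
proof -
  let ?C = "{e. e \<subseteq> K \<and> card e = 2}"
  obtain g where g: "bij_betw g {..<card K choose 2} ?C"
    using ex_bij_betw_nat_finite[of ?C] n_subsets[of K 2] assms(2) by (auto simp: atLeast0LessThan)
  have "?C \<subseteq> E"
    using assms(1) by (auto simp: is_clique_def card_2_iff)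
  show thesis
  proof (rule that)
    show "inj_on g {..<card K choose 2}"
      using g by (rule bij_betw_imp_inj_on)
    show "g i \<in> E \<and> g i \<subseteq> K" if "i < card K choose 2" for i
    proof -
      have "g i \<in> ?C"
        using bij_betw_apply[OF g] that by simp
      with \<open>?C \<subseteq> E\<close> show ?thesis
        by blast
    qed
  qed
qed

theorem lemma6p2:
  fixes V :: "'a set" and E :: "'a set set" and k :: nat
  assumes "simple_graph V E"
    and "k \<ge> 1"
    and "\<exists>K. is_clique V E K \<and> card K = k"
  shows "\<exists>m \<le> 2 * (k choose 2) + (k choose 2)^2 + 2 * k.
           tj_seq V E k (Vx ` V \<union> Lset k \<union> Qset k) (Vx ` V \<union> Rset k \<union> Pset k) m"
proof -
  obtain K where K: "is_clique V E K" "card K = k"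
    using assms(3) by blast
  have "finite V"
    using assms(1) unfolding simple_graph_def by blast
  have "K \<subseteq> V"
    using K(1) unfolding is_clique_def by blast
  then obtain g where g: "inj_on g {..<k choose 2}"
      "\<And>i. i < k choose 2 \<Longrightarrow> g i \<in> E \<and> g i \<subseteq> K"
    using clique_edges_enumeration[OF K(1), unfolded K(2)] \<open>finite V\<close> finite_subset by blast
  have "finite (Vx ` V \<union> Lset k \<union> Qset k)"
    using \<open>finite V\<close> by (simp add: Lset_def Qset_def finite_image_set2)
  then have "tj_seq V E k (Vx ` V \<union> Lset k \<union> Qset k) (Vx ` V \<union> Rset k \<union> Pset k)
      (2 * card K + 2 * (k choose 2) + (k choose 2)^2)"
    using tj_reach_imp_tj_seq tj_reach_through_clique_edges[OF \<open>finite V\<close> \<open>K \<subseteq> V\<close> g] by blast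
  then show ?thesis
    using K(2) by (intro exI[of _ "2 * k + 2 * (k choose 2) + (k choose 2)^2"]) simp
qed

end
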